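(* Let $n\ge 2$ and $m_1,\dots,m_n\ge1$ be integers. For $h=1,\dots,n$ let $$|\mathscr{G}_h\rangle=\tfrac{1}{\sqrt2}\Big(|0\rangle\textstyle\bigotimes_{k=2}^{2m_h}|i^h_k\rangle+s_h\,|1\rangle\bigotimes_{k=2}^{2m_h}|\bar i^h_k\rangle\Big)$$ with $i^h_k\in\{0,1\}$ and $s_h\in\{+1,-1\}$, and suppose that either for every $h$ the string $0i^h_2\cdots i^h_{m_h}$ equals $i^h_{m_h+1}\cdots i^h_{2m_h}$, or for every $h$ it equals $\bar i^h_{m_h+1}\cdots\bar i^h_{2m_h}$. Consider $\bigotimes_{h=1}^n|\mathscr{G}_h\rangle$, perform a projective measurement in the GHZ basis (Bell basis when $n=2$, $m_1=m_2=1$) on the first $m_h$ qubits of each state (ordered by $h$), and let $|\mathcal{G}_a\rangle$ be the outcome and $|\mathcal{G}_b\rangle$ the state into which the remaining qubits (the last $m_h$ qubits of each state, ordered by $h$) collapse. If $s_h=+1$ for all $h$, then $|\mathcal{G}_a\rangle$ and $|\mathcal{G}_b\rangle$ are the same. If $s_h=-1$ for all $h$, then $|\mathcal{G}_a\rangle$ and $|\mathcal{G}_b\rangle$ are the same when $n$ is even and different when $n$ is odd.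
   Context: For a bit $b$, $\bar b=1-b$. For $N\ge 2$ qubits, the GHZ basis is the orthonormal basis $\frac{1}{\sqrt2}\big(|0\,b_2\cdots b_N\rangle\pm|1\,\bar b_2\cdots\bar b_N\rangle\big)$, $b_k\in\{0,1\}$; for $N=2$ it is the Bell basis. "Same" means equal as quantum states (up to a global phase). *)

theory Defs
  imports Complex_Main
begin

text \<open>States of N qubits are amplitude functions on computational basis strings
  (bool lists, False = 0, True = 1), zero outside strings of length N.\<close>

definition bitstrings :: "nat \<Rightarrow> bool list set" where
  "bitstrings N = {xs. length xs = N}"

definition ket :: "bool list \<Rightarrow> bool list \<Rightarrow> complex" where
  "ket b = (\<lambda>xs. if xs = b then 1 else 0)"

definition ghz :: "bool list \<Rightarrow> complex \<Rightarrow> bool list \<Rightarrow> complex" where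
  "ghz b sg = (\<lambda>xs. (ket (False # b) xs + sg * ket (True # map Not b) xs) / complex_of_real (sqrt 2))"

definition ghz_basis :: "nat \<Rightarrow> (bool list \<Rightarrow> complex) set" where
  "ghz_basis N = {ghz b sg | b sg. length b = N - 1 \<and> (sg = 1 \<or> sg = -1)}"

definition qnorm :: "nat \<Rightarrow> (bool list \<Rightarrow> complex) \<Rightarrow> real" where
  "qnorm N \<psi> = sqrt (\<Sum>xs\<in>bitstrings N. (cmod (\<psi> xs))^2)"

definition same_state :: "(bool list \<Rightarrow> complex) \<Rightarrow> (bool list \<Rightarrow> complex) \<Rightarrow> bool" where
  "same_state u v \<longleftrightarrow> (\<exists>c. cmod c = 1 \<and> u = (\<lambda>xs. c * v xs))"

definition partial_proj :: "nat \<Rightarrow> (bool list \<Rightarrow> complex) \<Rightarrow> (bool list \<Rightarrow> complex) \<Rightarrow> bool list \<Rightarrow> complex" where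
  "partial_proj M g \<Psi> = (\<lambda>ys. \<Sum>xs\<in>bitstrings M. cnj (g xs) * \<Psi> (xs @ ys))"

definition outcome_prob :: "nat \<Rightarrow> nat \<Rightarrow> (bool list \<Rightarrow> complex) \<Rightarrow> (bool list \<Rightarrow> complex) \<Rightarrow> real" where
  "outcome_prob M K g \<Psi> = (qnorm K (partial_proj M g \<Psi>))^2"

definition post_state :: "nat \<Rightarrow> nat \<Rightarrow> (bool list \<Rightarrow> complex) \<Rightarrow> (bool list \<Rightarrow> complex) \<Rightarrow> bool list \<Rightarrow> complex" where
  "post_state M K g \<Psi> = (\<lambda>ys. partial_proj M g \<Psi> ys / complex_of_real (qnorm K (partial_proj M g \<Psi>)))"

text \<open>Qubit bookkeeping: state h (h < n) has 2 * m h qubits.\<close>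
definition offset :: "(nat \<Rightarrow> nat) \<Rightarrow> nat \<Rightarrow> nat" where
  "offset m h = (\<Sum>j<h. m j)"

definition chunk :: "(nat \<Rightarrow> nat) \<Rightarrow> nat \<Rightarrow> bool list \<Rightarrow> bool list" where
  "chunk m h xs = take (m h) (drop (offset m h) xs)"

text \<open>The tensor product of the states G 0, ..., G (n-1) with the qubits reordered so that
  the first m h qubits of each state come first (ordered by h), followed by the last
  m h qubits of each state (ordered by h).\<close>
definition joint_state :: "nat \<Rightarrow> (nat \<Rightarrow> nat) \<Rightarrow> (nat \<Rightarrow> bool list \<Rightarrow> complex) \<Rightarrow> bool list \<Rightarrow> complex" where
  "joint_state n m G = (\<lambda>xs. if length xs = 2 * offset m n
     then (\<Prod>h<n. G h (chunk m h (take (offset m n) xs) @ chunk m h (drop (offset m n) xs)))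
     else 0)"

end

theory Submission
  imports Defs
begin

text \<open>Each factor satisfies \<open>G\<^sub>h(\<not>z) = s\<^sub>h G\<^sub>h(z)\<close>, so the joint state \<open>J\<close> satisfies
  \<open>J(\<not>z) = \<sigma> J(z)\<close> with \<open>\<sigma> = \<Prod> s\<^sub>h\<close>. The hypothesis on the strings \<open>i\<^sup>h\<close> makes the
  two halves of every factor perfectly correlated in the same way (\<open>y = x\<close> for all \<open>h\<close>, or
  \<open>y = \<not>x\<close> for all \<open>h\<close>), so \<open>J(x @ y) \<noteq> 0\<close> forces \<open>y = x\<close> or \<open>y = \<not>x\<close>. Projecting the first
  half onto \<open>(|w\<rangle> + sg |\<not>w\<rangle>)/\<surd>2\<close> therefore leaves a vector supported on \<open>{w, \<not>w}\<close> with
  amplitudes related by the factor \<open>sg \<sigma>\<close>: a multiple of the GHZ state of sign \<open>sg \<sigma>\<close>, which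
  is the measured state up to phase exactly when \<open>\<sigma> = 1\<close>.\<close>

lemma finite_bitstrings: "finite (bitstrings N)"
  using finite_lists_length_eq[of "UNIV :: bool set" N] by (simp add: bitstrings_def)

lemma offset_Suc: "offset m (Suc h) = offset m h + m h"
  by (simp add: offset_def)

lemma offset_mono: "h \<le> n \<Longrightarrow> offset m h \<le> offset m n"
  unfolding offset_def by (rule sum_mono2) auto

lemma length_chunk: "length xs = offset m n \<Longrightarrow> h < n \<Longrightarrow> length (chunk m h xs) = m h"
  using offset_mono[of "Suc h" n m] by (simp add: chunk_def offset_Suc)

lemma chunk_map: "chunk m h (map f xs) = map f (chunk m h xs)"
  by (simp add: chunk_def take_map drop_map)

lemma take_offset_eq_if_chunks_eq:
  "(\<forall>h<n. chunk m h xs = chunk m h ys) \<Longrightarrow> take (offset m n) xs = take (offset m n) ys"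
proof (induction n)
  case 0
  then show ?case by (simp add: offset_def)
next
  case (Suc n)
  then show ?case by (simp add: offset_Suc take_add chunk_def)
qed

lemma eq_if_chunks_eq:
  "length xs = offset m n \<Longrightarrow> length ys = offset m n \<Longrightarrow> (\<forall>h<n. chunk m h xs = chunk m h ys) \<Longrightarrow> xs = ys"
  by (metis take_all order_refl take_offset_eq_if_chunks_eq)

lemma ghz_False: "ghz b t (False # b) = 1 / complex_of_real (sqrt 2)"
  by (simp add: ghz_def ket_def)

lemma ghz_True: "ghz b t (True # map Not b) = t / complex_of_real (sqrt 2)"
  by (simp add: ghz_def ket_def)

lemma ghz_nonzero_cases: "ghz b t z \<noteq> 0 \<Longrightarrow> z = False # b \<or> z = map Not (False # b)"
  by (auto simp: ghz_def ket_def split: if_splits)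

lemma ghz_map_Not:
  assumes "t = 1 \<or> t = -1"
  shows "ghz b t (map Not z) = t * ghz b t z"
proof -
  have map_Not_eq: "map Not z = p \<longleftrightarrow> z = map Not p" for p
    by (auto simp: comp_def)
  show ?thesis
    using assms by (auto simp: map_Not_eq ghz_def ket_def field_simps comp_def)
qed

lemma qnorm_scaled_ghz:
  assumes "t = 1 \<or> t = -1"
  shows "qnorm (Suc (length b)) (\<lambda>ys. C * ghz b t ys) = cmod C"
proof -
  have pointwise: "(cmod (C * ghz b t ys))\<^sup>2 =
      (if ys = False # b then (cmod C)\<^sup>2 / 2 else 0) + (if ys = True # map Not b then (cmod C)\<^sup>2 / 2 else 0)"
    for ys
    using assms by (auto simp: ghz_def ket_def norm_mult norm_divide power_mult_distrib power_divide)
  have "(\<Sum>ys\<in>bitstrings (Suc (length b)). (cmod (C * ghz b t ys))\<^sup>2) = (cmod C)\<^sup>2"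
    unfolding pointwise sum.distrib by (simp add: finite_bitstrings) (simp add: bitstrings_def)
  then show ?thesis
    by (simp add: qnorm_def)
qed

lemma eq_scaled_ghz_if_supported:
  fixes P :: "bool list \<Rightarrow> complex"
  assumes "\<And>ys. P ys \<noteq> 0 \<Longrightarrow> ys = False # b \<or> ys = True # map Not b"
    and "P (True # map Not b) = t * P (False # b)"
  shows "P = (\<lambda>ys. (complex_of_real (sqrt 2) * P (False # b)) * ghz b t ys)"
proof
  fix ys
  show "P ys = (complex_of_real (sqrt 2) * P (False # b)) * ghz b t ys"
    using assms by (cases "ys = False # b \<or> ys = True # map Not b") (auto simp: ghz_def ket_def)
qed

lemma same_state_phase_ghz_iff:
  assumes "cmod c = 1"
  shows "same_state (\<lambda>ys. c * ghz b t ys) (ghz b sg) \<longleftrightarrow> t = sg"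
proof
  assume "same_state (\<lambda>ys. c * ghz b t ys) (ghz b sg)"
  then obtain d where "(\<lambda>ys. c * ghz b t ys) = (\<lambda>ys. d * ghz b sg ys)"
    unfolding same_state_def by blast
  then have "c * ghz b t z = d * ghz b sg z" for z
    by metis
  from this[of "False # b"] this[of "True # map Not b"] have "c = d" "c * t = d * sg"
    by (simp_all add: ghz_False ghz_True)
  then show "t = sg"
    using assms by auto
qed (use assms in \<open>auto simp: same_state_def\<close>)

lemma ghz_nonzero_halves:
  assumes "drop k (False # c) = map \<phi> (take k (False # c))" and "\<And>x. \<phi> (\<not> x) = (\<not> \<phi> x)"
    and "length a = k" and "ghz c t (a @ b) \<noteq> 0"
  shows "b = map \<phi> a"
proof -
  have a: "a = take k (a @ b)" and b: "b = drop k (a @ b)"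
    using assms(3) by simp_all
  have "map \<phi> (map Not xs) = map Not (map \<phi> xs)" for xs
    using assms(2) by simp
  then show ?thesis
    using ghz_nonzero_cases[OF assms(4)] a b assms(1) by (metis drop_map take_map)
qed

lemma joint_state_map_Not:
  assumes "\<And>h z. h < n \<Longrightarrow> G h (map Not z) = \<sigma> h * G h z"
  shows "joint_state n m G (map Not zs) = (\<Prod>h<n. \<sigma> h) * joint_state n m G zs"
  using assms
  by (simp add: joint_state_def take_map drop_map chunk_map prod.distrib flip: map_append)

lemma joint_state_support:
  assumes "\<And>h a b. h < n \<Longrightarrow> length a = m h \<Longrightarrow> G h (a @ b) \<noteq> 0 \<Longrightarrow> b = map \<phi> a"
    and "length xs = offset m n" and "joint_state n m G (xs @ ys) \<noteq> 0"
  shows "ys = map \<phi> xs"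
proof (rule eq_if_chunks_eq)
  have factors: "\<forall>h<n. G h (chunk m h xs @ chunk m h ys) \<noteq> 0" and ys: "length ys = offset m n"
    using assms(2,3) by (auto simp: joint_state_def split: if_splits)
  show "length ys = offset m n" "length (map \<phi> xs) = offset m n"
    using ys assms(2) by simp_all
  show "\<forall>h<n. chunk m h ys = chunk m h (map \<phi> xs)"
    using factors assms(1) length_chunk[OF assms(2)] by (simp add: chunk_map)
qed

lemma partial_proj_ghz:
  assumes "sg = 1 \<or> sg = -1"
  shows "partial_proj (Suc (length b)) (ghz b sg) J ys =
    (J ((False # b) @ ys) + sg * J ((True # map Not b) @ ys)) / complex_of_real (sqrt 2)"
proof -
  have pointwise: "cnj (ghz b sg xs) * J (xs @ ys) =
      (if xs = False # b then J ((False # b) @ ys) / complex_of_real (sqrt 2) else 0) +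
      (if xs = True # map Not b then sg * J ((True # map Not b) @ ys) / complex_of_real (sqrt 2) else 0)"
    for xs
    using assms by (auto simp: ghz_def ket_def)
  show ?thesis
    unfolding partial_proj_def pointwise sum.distrib
    by (simp add: finite_bitstrings add_divide_distrib) (simp add: bitstrings_def)
qed

lemma partial_proj_ghz_eq_scaled_ghz:
  assumes sg: "sg = 1 \<or> sg = -1"
    and flip: "\<And>z. J (map Not z) = \<sigma> * J z"
    and support: "\<And>xs ys. length xs = Suc (length b) \<Longrightarrow> J (xs @ ys) \<noteq> 0 \<Longrightarrow> ys = xs \<or> ys = map Not xs"
  obtains C where "partial_proj (Suc (length b)) (ghz b sg) J = (\<lambda>ys. C * ghz b (sg * \<sigma>) ys)"
proof -
  define w where "w = False # b"
  define P where "P = partial_proj (Suc (length b)) (ghz b sg) J"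
  have w: "length w = Suc (length b)" "length (map Not w) = Suc (length b)" "map Not (map Not w) = w"
    by (simp_all add: w_def comp_def)
  have P: "P ys = (J (w @ ys) + sg * J (map Not w @ ys)) / complex_of_real (sqrt 2)" for ys
    unfolding P_def w_def using partial_proj_ghz[OF sg] by simp
  have "J (w @ map Not w) = \<sigma> * J (map Not w @ w)" "J (map Not w @ map Not w) = \<sigma> * J (w @ w)"
    using flip[of "map Not w @ w"] flip[of "w @ w"] w(3) by simp_all
  moreover have "sg * sg = 1"
    using sg by auto
  ultimately have "P (map Not w) = sg * \<sigma> * P w"
    unfolding P by (simp add: algebra_simps)
  moreover have "ys = w \<or> ys = map Not w" if "P ys \<noteq> 0" for ys
    using that support[OF w(1), of ys] support[OF w(2), of ys] w(3) unfolding P by fastforce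
  ultimately have "P = (\<lambda>ys. (complex_of_real (sqrt 2) * P w) * ghz b (sg * \<sigma>) ys)"
    unfolding w_def by (intro eq_scaled_ghz_if_supported) simp_all
  then show ?thesis
    using that unfolding P_def by blast
qed

lemma same_state_post_state_ghz_iff:
  assumes sg: "sg = 1 \<or> sg = -1" and \<sigma>: "\<sigma> = 1 \<or> \<sigma> = -1"
    and flip: "\<And>z. J (map Not z) = \<sigma> * J z"
    and support: "\<And>xs ys. length xs = Suc (length b) \<Longrightarrow> J (xs @ ys) \<noteq> 0 \<Longrightarrow> ys = xs \<or> ys = map Not xs"
    and possible: "outcome_prob (Suc (length b)) (Suc (length b)) (ghz b sg) J > 0"
  shows "same_state (post_state (Suc (length b)) (Suc (length b)) (ghz b sg) J) (ghz b sg) \<longleftrightarrow> \<sigma> = 1"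
proof -
  obtain C where C: "partial_proj (Suc (length b)) (ghz b sg) J = (\<lambda>ys. C * ghz b (sg * \<sigma>) ys)"
    using partial_proj_ghz_eq_scaled_ghz[of sg J \<sigma> b, OF sg flip support] by blast
  have norm: "qnorm (Suc (length b)) (partial_proj (Suc (length b)) (ghz b sg) J) = cmod C"
    unfolding C using sg \<sigma> by (intro qnorm_scaled_ghz) auto
  then have "C \<noteq> 0"
    using possible by (auto simp: outcome_prob_def)
  have "post_state (Suc (length b)) (Suc (length b)) (ghz b sg) J = (\<lambda>ys. (C / cmod C) * ghz b (sg * \<sigma>) ys)"
    unfolding post_state_def norm unfolding C by simp
  moreover have "cmod (C / cmod C) = 1"
    using \<open>C \<noteq> 0\<close> by (simp add: norm_divide)
  ultimately have "same_state (post_state (Suc (length b)) (Suc (length b)) (ghz b sg) J) (ghz b sg) \<longleftrightarrow> sg * \<sigma> = sg"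
    by (simp only: same_state_phase_ghz_iff)
  also have "\<dots> \<longleftrightarrow> \<sigma> = 1"
    using sg by auto
  finally show ?thesis .
qed

lemma prod_sign_cases:
  fixes t :: "'a \<Rightarrow> 'b :: comm_ring_1"
  assumes "\<forall>x\<in>A. t x = 1 \<or> t x = -1"
  shows "prod t A = 1 \<or> prod t A = -1"
  using assms by (induction A rule: infinite_finite_induct) auto

lemma same_state_post_state_joint_ghz_iff:
  fixes t :: "nat \<Rightarrow> complex"
  assumes t: "\<forall>h<n. t h = 1 \<or> t h = -1"
    and \<phi>: "\<phi> = id \<or> \<phi> = Not"
    and halves: "\<forall>h<n. drop (m h) (False # c h) = map \<phi> (take (m h) (False # c h))"
    and sg: "sg = 1 \<or> sg = -1" and M: "offset m n = Suc (length b)"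
    and possible: "outcome_prob (offset m n) (offset m n) (ghz b sg) (joint_state n m (\<lambda>h. ghz (c h) (t h))) > 0"
  shows "same_state (post_state (offset m n) (offset m n) (ghz b sg) (joint_state n m (\<lambda>h. ghz (c h) (t h))))
      (ghz b sg) \<longleftrightarrow> (\<Prod>h<n. t h) = 1"
proof -
  define J where "J = joint_state n m (\<lambda>h. ghz (c h) (t h))"
  have flip: "J (map Not z) = (\<Prod>h<n. t h) * J z" for z
    unfolding J_def by (rule joint_state_map_Not, rule ghz_map_Not) (use t in auto)
  have "y = map \<phi> x" if "h < n" "length x = m h" "ghz (c h) (t h) (x @ y) \<noteq> 0" for h x y
    by (rule ghz_nonzero_halves[where \<phi> = \<phi>]) (use halves \<phi> that in auto)
  then have "ys = map \<phi> xs" if "length xs = offset m n" "J (xs @ ys) \<noteq> 0" for xs ys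
    using that unfolding J_def by (rule joint_state_support)
  then have support: "ys = xs \<or> ys = map Not xs" if "length xs = Suc (length b)" "J (xs @ ys) \<noteq> 0" for xs ys
    using that \<phi> M by auto
  have "(\<Prod>h<n. t h) = 1 \<or> (\<Prod>h<n. t h) = -1"
    using t by (intro prod_sign_cases) simp
  then show ?thesis
    using possible unfolding M J_def[symmetric]
    by (intro same_state_post_state_ghz_iff sg flip support)
qed

lemma drop_eq_map_take_cases:
  assumes "(\<forall>h<n. take (k h) (F h) = drop (k h) (F h)) \<or> (\<forall>h<n. take (k h) (F h) = map Not (drop (k h) (F h)))"
  obtains \<phi> where "\<phi> = id \<or> \<phi> = Not" and "\<forall>h<n. drop (k h) (F h) = map \<phi> (take (k h) (F h))"
proof (cases "\<forall>h<n. take (k h) (F h) = drop (k h) (F h)")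
  case True
  then show ?thesis
    by (intro that[of id]) simp_all
next
  case False
  then have "\<forall>h<n. take (k h) (F h) = map Not (drop (k h) (F h))"
    using assms by blast
  then show ?thesis
    by (intro that[of Not]) (simp_all add: comp_def)
qed

theorem corollary1:
  fixes n :: nat and m :: "nat \<Rightarrow> nat" and i :: "nat \<Rightarrow> bool list"
    and s :: "nat \<Rightarrow> real" and g :: "bool list \<Rightarrow> complex"
  assumes "n \<ge> 2"
    and "\<forall>h<n. m h \<ge> 1"
    and "\<forall>h<n. length (i h) = 2 * m h - 1"
    and "\<forall>h<n. s h = 1 \<or> s h = -1"
    and "(\<forall>h<n. take (m h) (False # i h) = drop (m h) (False # i h))
       \<or> (\<forall>h<n. take (m h) (False # i h) = map Not (drop (m h) (False # i h)))"
    and "g \<in> ghz_basis (offset m n)"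
    and "outcome_prob (offset m n) (offset m n) g
           (joint_state n m (\<lambda>h. ghz (i h) (complex_of_real (s h)))) > 0"
  shows "((\<forall>h<n. s h = 1) \<longrightarrow>
            same_state (post_state (offset m n) (offset m n) g
              (joint_state n m (\<lambda>h. ghz (i h) (complex_of_real (s h))))) g)
       \<and> ((\<forall>h<n. s h = -1) \<longrightarrow>
            (same_state (post_state (offset m n) (offset m n) g
              (joint_state n m (\<lambda>h. ghz (i h) (complex_of_real (s h))))) g \<longleftrightarrow> even n))"
proof -
  have "n \<le> offset m n"
    unfolding offset_def using sum_mono[of "{..<n}" "\<lambda>_. 1" m] assms(2) by simp
  obtain b sg where g: "g = ghz b sg" "sg = 1 \<or> sg = -1" and "length b = offset m n - 1"
    using assms(6) unfolding ghz_basis_def by blast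
  then have M: "offset m n = Suc (length b)"
    using \<open>n \<le> offset m n\<close> assms(1) by simp
  obtain \<phi> where \<phi>: "\<phi> = id \<or> \<phi> = Not"
    and halves: "\<forall>h<n. drop (m h) (False # i h) = map \<phi> (take (m h) (False # i h))"
    using assms(5) by (rule drop_eq_map_take_cases)
  have collapse: "same_state (post_state (offset m n) (offset m n) g
      (joint_state n m (\<lambda>h. ghz (i h) (complex_of_real (s h))))) g
    \<longleftrightarrow> (\<Prod>h<n. complex_of_real (s h)) = 1"
    unfolding g(1) by (rule same_state_post_state_joint_ghz_iff) (use assms(4,7) \<phi> halves g M in auto)
  show ?thesis
  proof (intro conjI impI)
    assume "\<forall>h<n. s h = -1"
    then have "(\<Prod>h<n. complex_of_real (s h)) = (-1) ^ n"
      by simp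
    then show "same_state (post_state (offset m n) (offset m n) g
        (joint_state n m (\<lambda>h. ghz (i h) (complex_of_real (s h))))) g \<longleftrightarrow> even n"
      using collapse by (cases "even n") simp_all
  qed (use collapse in simp)
qed

end
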